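(* For each positive integer $k$ and each positive rational number $s$, there are only finitely many (isomorphism classes of) connected graphs $X$ with maximum valency at most $k$ for which there exist distinct vertices $a,b$ of $X$ such that the $s$-pair state $\mathbf e_a+s\mathbf e_b$ is periodic in $X$ with respect to the Hamiltonian $A$; the same holds with $A$ replaced by $L$, and with $A$ replaced by $Q$.
   Context: Graphs are simple, undirected, unweighted. $A$, $L=D-A$, $Q=D+A$ are the adjacency, Laplacian and signless Laplacian matrices. For a real symmetric Hamiltonian $M$, $U(t)=e^{-\mathrm{i}tM}$. A vector $\mathbf u$ is periodic (at time $\tau>0$) if $U(\tau)\mathbf u=\eta\mathbf u$ for some complex $\eta$ with $|\eta|=1$. For distinct vertices $a,b$ and nonzero $s$, the vector $\mathbf e_a+s\mathbf e_b$ is called an $s$-pair state. *)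

theory Defs
  imports Complex_Main
begin

text \<open>A finite simple graph is represented by a vertex set V (of naturals; every finite
graph is isomorphic to one of this form) and a symmetric irreflexive edge relation E on V.\<close>

type_synonym graph = "nat set \<times> (nat \<Rightarrow> nat \<Rightarrow> bool)"

definition simple_graph :: "nat set \<Rightarrow> (nat \<Rightarrow> nat \<Rightarrow> bool) \<Rightarrow> bool" where
  "simple_graph V E \<longleftrightarrow> finite V \<and> (\<forall>x y. E x y \<longrightarrow> x \<in> V \<and> y \<in> V)
     \<and> (\<forall>x y. E x y \<longrightarrow> E y x) \<and> (\<forall>x. \<not> E x x)"

definition connected_graph :: "nat set \<Rightarrow> (nat \<Rightarrow> nat \<Rightarrow> bool) \<Rightarrow> bool" where
  "connected_graph V E \<longleftrightarrow> (\<forall>x\<in>V. \<forall>y\<in>V. E\<^sup>*\<^sup>* x y)"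

definition degree :: "nat set \<Rightarrow> (nat \<Rightarrow> nat \<Rightarrow> bool) \<Rightarrow> nat \<Rightarrow> nat" where
  "degree V E v = card {u\<in>V. E v u}"

definition max_valency_le :: "nat set \<Rightarrow> (nat \<Rightarrow> nat \<Rightarrow> bool) \<Rightarrow> nat \<Rightarrow> bool" where
  "max_valency_le V E k \<longleftrightarrow> (\<forall>v\<in>V. degree V E v \<le> k)"

definition graph_iso :: "graph \<Rightarrow> graph \<Rightarrow> bool" where
  "graph_iso G H \<longleftrightarrow> (\<exists>f. bij_betw f (fst G) (fst H) \<and>
     (\<forall>x\<in>fst G. \<forall>y\<in>fst G. snd G x y \<longleftrightarrow> snd H (f x) (f y)))"

definition adj_mat :: "nat set \<Rightarrow> (nat \<Rightarrow> nat \<Rightarrow> bool) \<Rightarrow> nat \<Rightarrow> nat \<Rightarrow> complex" where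
  "adj_mat V E i j = (if E i j then 1 else 0)"

definition deg_mat :: "nat set \<Rightarrow> (nat \<Rightarrow> nat \<Rightarrow> bool) \<Rightarrow> nat \<Rightarrow> nat \<Rightarrow> complex" where
  "deg_mat V E i j = (if i = j then of_nat (degree V E i) else 0)"

definition lap_mat :: "nat set \<Rightarrow> (nat \<Rightarrow> nat \<Rightarrow> bool) \<Rightarrow> nat \<Rightarrow> nat \<Rightarrow> complex" where
  "lap_mat V E i j = deg_mat V E i j - adj_mat V E i j"

definition slap_mat :: "nat set \<Rightarrow> (nat \<Rightarrow> nat \<Rightarrow> bool) \<Rightarrow> nat \<Rightarrow> nat \<Rightarrow> complex" where
  "slap_mat V E i j = deg_mat V E i j + adj_mat V E i j"

fun mat_pow :: "nat set \<Rightarrow> (nat \<Rightarrow> nat \<Rightarrow> complex) \<Rightarrow> nat \<Rightarrow> nat \<Rightarrow> nat \<Rightarrow> complex" where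
  "mat_pow V M 0 i j = (if i = j then 1 else 0)"
| "mat_pow V M (Suc m) i j = (\<Sum>l\<in>V. M i l * mat_pow V M m l j)"

definition evol :: "nat set \<Rightarrow> (nat \<Rightarrow> nat \<Rightarrow> complex) \<Rightarrow> real \<Rightarrow> nat \<Rightarrow> nat \<Rightarrow> complex" where
  "evol V M t i j = (\<Sum>m. ((- \<i> * of_real t) ^ m / of_nat (fact m)) * mat_pow V M m i j)"

definition periodic_vec :: "nat set \<Rightarrow> (nat \<Rightarrow> nat \<Rightarrow> complex) \<Rightarrow> (nat \<Rightarrow> complex) \<Rightarrow> bool" where
  "periodic_vec V M u \<longleftrightarrow> (\<exists>\<tau>>0. \<exists>\<eta>. cmod \<eta> = 1 \<and>
      (\<forall>i\<in>V. (\<Sum>j\<in>V. evol V M \<tau> i j * u j) = \<eta> * u i))"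

definition pair_state :: "nat \<Rightarrow> nat \<Rightarrow> real \<Rightarrow> nat \<Rightarrow> complex" where
  "pair_state a b s i = (if i = a then 1 else 0) + (if i = b then of_real s else 0)"

definition has_periodic_pair :: "(nat set \<Rightarrow> (nat \<Rightarrow> nat \<Rightarrow> bool) \<Rightarrow> nat \<Rightarrow> nat \<Rightarrow> complex)
   \<Rightarrow> real \<Rightarrow> nat set \<Rightarrow> (nat \<Rightarrow> nat \<Rightarrow> bool) \<Rightarrow> bool" where
  "has_periodic_pair H s V E \<longleftrightarrow> (\<exists>a\<in>V. \<exists>b\<in>V. a \<noteq> b \<and> periodic_vec V (H V E) (pair_state a b s))"

definition finitely_many_iso_classes :: "(nat set \<Rightarrow> (nat \<Rightarrow> nat \<Rightarrow> bool) \<Rightarrow> bool) \<Rightarrow> bool" where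
  "finitely_many_iso_classes P \<longleftrightarrow> (\<exists>S::graph set. finite S \<and>
     (\<forall>V E. P V E \<longrightarrow> (\<exists>G\<in>S. graph_iso (V, E) G)))"

end

theory Submission
  imports Defs "Jordan_Normal_Form.Char_Poly" "HOL-Computational_Algebra.Fundamental_Theorem_Algebra"
    "HOL-Library.Function_Algebras"
begin

text \<open>Let \<open>M\<close> be \<open>A\<close>, \<open>L\<close> or \<open>Q\<close> and \<open>w = e\<^sub>a + s e\<^sub>b\<close> periodic with period \<open>\<tau>\<close> and phase \<open>\<eta>\<close>.
  Every root \<open>\<theta>\<close> of the minimal polynomial \<open>q\<close> of \<open>w\<close> with respect to \<open>M\<close> is an eigenvalue with
  \<open>exp (-i\<tau>\<theta>) = \<eta>\<close>, so the roots are real, simple, lie in \<open>[-2k, 2k]\<close> and form part of an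
  arithmetic progression with difference \<open>2\<pi>/\<tau>\<close>. Since \<open>M\<close> and \<open>w\<close> are rational, so is \<open>q\<close>;
  hence the first two power sums of the roots are rational, which makes every \<open>(\<theta> - \<theta>')\<^sup>2\<close>
  rational. Being also an algebraic integer (an eigenvalue of an integer matrix), it is an
  integer, so distinct roots are at distance at least 1 and \<open>deg q \<le> 4k + 1\<close>. Finally
  \<open>M\<^sup>j w\<close> does not vanish at vertices at distance exactly \<open>j\<close> from \<open>{a, b}\<close>, while \<open>q(M) w = 0\<close>
  expresses \<open>M\<^sup>d w\<close> through lower powers; so every vertex is within distance \<open>4k\<close> of \<open>{a, b}\<close>,
  and there are at most \<open>2 (k + 1) ^ (4k)\<close> of them.\<close>

hide_const (open) Determinant.adj_mat

section \<open>Matrices acting on vectors and polynomials in a matrix\<close>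

definition mat_vec :: "nat set \<Rightarrow> (nat \<Rightarrow> nat \<Rightarrow> complex) \<Rightarrow> (nat \<Rightarrow> complex) \<Rightarrow> nat \<Rightarrow> complex" where
  "mat_vec V M x = (\<lambda>i. \<Sum>l\<in>V. M i l * x l)"

definition mat_vec_pow :: "nat set \<Rightarrow> (nat \<Rightarrow> nat \<Rightarrow> complex) \<Rightarrow> nat \<Rightarrow> (nat \<Rightarrow> complex) \<Rightarrow> nat \<Rightarrow> complex" where
  "mat_vec_pow V M j = mat_vec V M ^^ j"

definition poly_mat_vec :: "nat set \<Rightarrow> (nat \<Rightarrow> nat \<Rightarrow> complex) \<Rightarrow> complex poly \<Rightarrow> (nat \<Rightarrow> complex) \<Rightarrow> nat \<Rightarrow> complex" where
  "poly_mat_vec V M p x = fold_coeffs (\<lambda>c y i. c * x i + mat_vec V M y i) p (\<lambda>_. 0)"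

lemma mat_vec_zero [simp]: "mat_vec V M (\<lambda>_. 0) = (\<lambda>_. 0)"
  by (simp add: mat_vec_def)

lemma mat_vec_add: "mat_vec V M (\<lambda>i. x i + y i) = (\<lambda>i. mat_vec V M x i + mat_vec V M y i)"
  by (simp add: mat_vec_def algebra_simps sum.distrib)

lemma mat_vec_scale: "mat_vec V M (\<lambda>i. c * x i) = (\<lambda>i. c * mat_vec V M x i)"
  by (simp add: mat_vec_def algebra_simps sum_distrib_left)

lemma mat_vec_pow_0 [simp]: "mat_vec_pow V M 0 x = x"
  by (simp add: mat_vec_pow_def)

lemma mat_vec_pow_Suc: "mat_vec_pow V M (Suc j) x = mat_vec V M (mat_vec_pow V M j x)"
  by (simp add: mat_vec_pow_def)

lemma mat_vec_pow_Suc': "mat_vec_pow V M (Suc j) x = mat_vec_pow V M j (mat_vec V M x)"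
  by (simp add: mat_vec_pow_def funpow_Suc_right del: funpow.simps)

lemma mat_vec_pow_add: "mat_vec_pow V M (j + m) x = mat_vec_pow V M j (mat_vec_pow V M m x)"
  by (simp add: mat_vec_pow_def funpow_add)

lemma mat_vec_pow_add_vec:
  "mat_vec_pow V M j (\<lambda>i. x i + y i) = (\<lambda>i. mat_vec_pow V M j x i + mat_vec_pow V M j y i)"
  by (induction j) (simp_all add: mat_vec_pow_Suc mat_vec_add)

lemma mat_vec_pow_scale: "mat_vec_pow V M j (\<lambda>i. c * x i) = (\<lambda>i. c * mat_vec_pow V M j x i)"
  by (induction j) (simp_all add: mat_vec_pow_Suc mat_vec_scale)

lemma mat_vec_pow_zero [simp]: "mat_vec_pow V M j (\<lambda>_. 0) = (\<lambda>_. 0)"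
  by (induction j) (simp_all add: mat_vec_pow_Suc)

lemma poly_mat_vec_0 [simp]: "poly_mat_vec V M 0 x = (\<lambda>_. 0)"
  by (simp add: poly_mat_vec_def)

lemma poly_mat_vec_pCons:
  "poly_mat_vec V M (pCons a p) x = (\<lambda>i. a * x i + mat_vec V M (poly_mat_vec V M p x) i)"
  by (cases "p = 0 \<and> a = 0") (auto simp: poly_mat_vec_def)

lemma poly_mat_vec_add:
  "poly_mat_vec V M (p + q) x = (\<lambda>i. poly_mat_vec V M p x i + poly_mat_vec V M q x i)"
  by (induction p q rule: poly_induct2)
    (simp_all add: poly_mat_vec_pCons mat_vec_add[unfolded fun_eq_iff, rule_format, symmetric] algebra_simps)

lemma poly_mat_vec_smult:
  "poly_mat_vec V M (Polynomial.smult c p) x = (\<lambda>i. c * poly_mat_vec V M p x i)"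
proof (induction p)
  case (pCons a p)
  show ?case
    by (simp add: poly_mat_vec_pCons pCons(2) mat_vec_scale[unfolded fun_eq_iff, rule_format, symmetric] algebra_simps)
qed simp

lemma poly_mat_vec_diff:
  "poly_mat_vec V M (p - q) x = (\<lambda>i. poly_mat_vec V M p x i - poly_mat_vec V M q x i)"
proof -
  have "p - q = p + Polynomial.smult (-1) q"
    by simp
  then show ?thesis
    by (simp only: poly_mat_vec_add poly_mat_vec_smult) simp
qed

lemma poly_mat_vec_mult:
  "poly_mat_vec V M (p * q) x = poly_mat_vec V M p (poly_mat_vec V M q x)"
proof (induction p)
  case (pCons a p)
  have "pCons a p * q = Polynomial.smult a q + pCons 0 (p * q)"
    by simp
  then show ?case
    by (simp add: poly_mat_vec_add poly_mat_vec_smult poly_mat_vec_pCons pCons(2))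
qed simp

lemma poly_mat_vec_scale:
  "poly_mat_vec V M p (\<lambda>i. c * x i) = (\<lambda>i. c * poly_mat_vec V M p x i)"
  by (induction p)
    (simp_all add: poly_mat_vec_pCons mat_vec_scale[unfolded fun_eq_iff, rule_format] algebra_simps)

lemma poly_mat_vec_linear_factor:
  "poly_mat_vec V M [:-\<theta>, 1:] x = (\<lambda>i. mat_vec V M x i - \<theta> * x i)"
  by (simp add: poly_mat_vec_pCons)

lemma poly_mat_vec_monom: "poly_mat_vec V M (monom c j) x = (\<lambda>i. c * mat_vec_pow V M j x i)"
  by (induction j) (simp_all add: monom_0 monom_Suc poly_mat_vec_pCons mat_vec_scale mat_vec_pow_Suc)

lemma poly_mat_vec_sum:
  "finite A \<Longrightarrow> poly_mat_vec V M (\<Sum>a\<in>A. f a) x = (\<lambda>i. \<Sum>a\<in>A. poly_mat_vec V M (f a) x i)"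
  by (induction A rule: finite_induct) (simp_all add: poly_mat_vec_add)

lemma poly_mat_vec_mat_vec:
  "poly_mat_vec V M p (mat_vec V M x) = mat_vec V M (poly_mat_vec V M p x)"
proof -
  have X: "poly_mat_vec V M [:0, 1:] y = mat_vec V M y" for y
    by (simp add: poly_mat_vec_pCons)
  have "poly_mat_vec V M (p * [:0, 1:]) x = poly_mat_vec V M p (mat_vec V M x)"
    by (simp only: poly_mat_vec_mult X)
  moreover have "poly_mat_vec V M ([:0, 1:] * p) x = mat_vec V M (poly_mat_vec V M p x)"
    by (simp only: poly_mat_vec_mult X)
  ultimately show ?thesis
    by (simp add: mult.commute)
qed

lemma poly_mat_vec_mat_vec_pow:
  "poly_mat_vec V M p (mat_vec_pow V M m x) = mat_vec_pow V M m (poly_mat_vec V M p x)"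
  by (induction m) (simp_all add: mat_vec_pow_Suc poly_mat_vec_mat_vec)

lemma poly_mat_vec_eq_sum:
  assumes "degree p \<le> N"
  shows "poly_mat_vec V M p x = (\<lambda>i. \<Sum>k\<le>N. coeff p k * mat_vec_pow V M k x i)"
proof -
  have "poly_mat_vec V M (\<Sum>k\<le>N. monom (coeff p k) k) x =
      (\<lambda>i. \<Sum>k\<le>N. coeff p k * mat_vec_pow V M k x i)"
    by (simp add: poly_mat_vec_sum poly_mat_vec_monom)
  then show ?thesis
    by (simp only: poly_as_sum_of_monoms'[OF assms])
qed

section \<open>The evolution operator\<close>

definition exp_coeff :: "real \<Rightarrow> nat \<Rightarrow> complex" where
  "exp_coeff t m = (- \<i> * of_real t) ^ m / of_nat (fact m)"

definition evol_vec :: "nat set \<Rightarrow> (nat \<Rightarrow> nat \<Rightarrow> complex) \<Rightarrow> real \<Rightarrow> (nat \<Rightarrow> complex) \<Rightarrow> nat \<Rightarrow> complex" where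
  "evol_vec V M t x = (\<lambda>i. \<Sum>m. exp_coeff t m * mat_vec_pow V M m x i)"

lemma norm_exp_coeff: "norm (exp_coeff t m) = \<bar>t\<bar> ^ m / fact m"
  by (simp add: exp_coeff_def norm_divide norm_power norm_mult)

lemma summable_exp_majorant: "summable (\<lambda>m. \<bar>t\<bar> ^ m / fact m * (C ^ m * X + Y) :: real)"
proof -
  have "summable (\<lambda>m. X * (inverse (fact m) * (\<bar>t\<bar> * C) ^ m) + Y * (inverse (fact m) * \<bar>t\<bar> ^ m) :: real)"
    by (intro summable_add summable_mult summable_exp)
  then show ?thesis
    by (simp add: algebra_simps power_mult_distrib divide_inverse)
qed

locale row_bounded =
  fixes V :: "nat set" and M :: "nat \<Rightarrow> nat \<Rightarrow> complex" and C :: real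
  assumes finite_V: "finite V"
    and row_sum_le: "\<And>i. (\<Sum>l\<in>V. cmod (M i l)) \<le> C"
begin

lemma bound_nonneg: "C \<ge> 0"
  using row_sum_le[of 0] sum_nonneg[of V "\<lambda>l. cmod (M 0 l)"] by auto

lemma norm_mat_vec_le:
  assumes "\<And>l. l \<in> V \<Longrightarrow> cmod (y l) \<le> B" "B \<ge> 0"
  shows "cmod (mat_vec V M y i) \<le> C * B"
proof -
  have "cmod (mat_vec V M y i) \<le> (\<Sum>l\<in>V. cmod (M i l) * cmod (y l))"
    unfolding mat_vec_def by (rule order.trans[OF norm_sum]) (simp add: norm_mult)
  also have "\<dots> \<le> (\<Sum>l\<in>V. cmod (M i l) * B)"
    using assms(1) by (intro sum_mono mult_left_mono) auto
  also have "\<dots> \<le> C * B"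
    using row_sum_le assms(2) by (simp add: sum_distrib_right[symmetric] mult_right_mono)
  finally show ?thesis .
qed

lemma norm_mat_vec_pow_Suc_le:
  "cmod (mat_vec_pow V M (Suc m) x i) \<le> C ^ Suc m * (\<Sum>l\<in>V. cmod (x l))"
proof (induction m arbitrary: i)
  case 0
  have "cmod (x l) \<le> (\<Sum>l\<in>V. cmod (x l))" if "l \<in> V" for l
    using finite_V that by (intro member_le_sum) auto
  then show ?case
    by (simp add: mat_vec_pow_Suc norm_mat_vec_le sum_nonneg)
next
  case (Suc m)
  then show ?case
    unfolding mat_vec_pow_Suc[of _ _ "Suc m"]
    using norm_mat_vec_le[of "mat_vec_pow V M (Suc m) x"] bound_nonneg
    by (simp add: sum_nonneg mult.assoc)
qed

lemma norm_mat_vec_pow_le: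
  "cmod (mat_vec_pow V M m x i) \<le> C ^ m * (\<Sum>l\<in>V. cmod (x l)) + cmod (x i)"
proof (cases m)
  case (Suc m')
  show ?thesis
    unfolding Suc using norm_mat_vec_pow_Suc_le[of m' x i] norm_ge_zero[of "x i"] by linarith
qed (simp add: sum_nonneg)

lemma summable_evol_vec: "summable (\<lambda>m. exp_coeff t m * mat_vec_pow V M m x i)"
proof (rule summable_comparison_test'[OF summable_exp_majorant])
  fix m
  show "norm (exp_coeff t m * mat_vec_pow V M m x i)
      \<le> \<bar>t\<bar> ^ m / fact m * (C ^ m * (\<Sum>l\<in>V. cmod (x l)) + cmod (x i))"
    unfolding norm_mult norm_exp_coeff by (intro mult_left_mono norm_mat_vec_pow_le) auto
qed

lemma evol_vec_add: "evol_vec V M t (\<lambda>i. x i + y i) = (\<lambda>i. evol_vec V M t x i + evol_vec V M t y i)"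
  unfolding evol_vec_def mat_vec_pow_add_vec
  by (simp add: suminf_add[OF summable_evol_vec summable_evol_vec] algebra_simps)

lemma evol_vec_scale: "evol_vec V M t (\<lambda>i. c * x i) = (\<lambda>i. c * evol_vec V M t x i)"
  unfolding evol_vec_def mat_vec_pow_scale
  using suminf_mult[OF summable_evol_vec, of c] by (simp add: algebra_simps)

lemma evol_vec_mat_vec: "evol_vec V M t (mat_vec V M x) = mat_vec V M (evol_vec V M t x)"
proof
  fix i
  have "mat_vec V M (evol_vec V M t x) i = (\<Sum>l\<in>V. \<Sum>m. M i l * (exp_coeff t m * mat_vec_pow V M m x l))"
    unfolding mat_vec_def evol_vec_def by (intro sum.cong refl suminf_mult[symmetric] summable_evol_vec)
  also have "\<dots> = (\<Sum>m. \<Sum>l\<in>V. M i l * (exp_coeff t m * mat_vec_pow V M m x l))"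
    by (rule suminf_sum[symmetric]) (intro summable_mult summable_evol_vec)
  also have "\<dots> = (\<Sum>m. exp_coeff t m * mat_vec V M (mat_vec_pow V M m x) i)"
    by (simp add: mat_vec_def sum_distrib_left algebra_simps)
  also have "\<dots> = (\<Sum>m. exp_coeff t m * mat_vec_pow V M m (mat_vec V M x) i)"
    by (simp only: mat_vec_pow_Suc[symmetric] mat_vec_pow_Suc')
  finally show "evol_vec V M t (mat_vec V M x) i = mat_vec V M (evol_vec V M t x) i"
    by (simp add: evol_vec_def)
qed

lemma evol_vec_poly_mat_vec:
  "evol_vec V M t (poly_mat_vec V M p x) = poly_mat_vec V M p (evol_vec V M t x)"
proof (induction p)
  case 0
  then show ?case
    by (simp add: evol_vec_def)
next
  case (pCons a p)
  then show ?case
    by (simp add: poly_mat_vec_pCons evol_vec_add evol_vec_scale evol_vec_mat_vec)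
qed

lemma evol_vec_eigenvector:
  assumes "mat_vec V M v = (\<lambda>i. \<theta> * v i)"
  shows "evol_vec V M t v i = exp (- \<i> * of_real t * \<theta>) * v i"
proof -
  have pow: "mat_vec_pow V M m v = (\<lambda>i. \<theta> ^ m * v i)" for m
  proof (induction m)
    case (Suc m)
    have "mat_vec_pow V M (Suc m) v = (\<lambda>i. \<theta> ^ m * mat_vec V M v i)"
      by (simp only: mat_vec_pow_Suc Suc.IH mat_vec_scale)
    then show ?case
      by (simp add: assms mult_ac)
  qed simp
  have "(\<lambda>m. v i * ((- \<i> * of_real t * \<theta>) ^ m /\<^sub>R fact m)) sums (v i * exp (- \<i> * of_real t * \<theta>))"
    by (intro sums_mult exp_converges)
  moreover have "v i * ((- \<i> * of_real t * \<theta>) ^ m /\<^sub>R fact m) = exp_coeff t m * mat_vec_pow V M m v i" for m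
    using power_mult_distrib[of "- \<i> * of_real t" \<theta> m]
    by (simp add: pow exp_coeff_def scaleR_conv_of_real divide_inverse)
  ultimately show ?thesis
    unfolding evol_vec_def by (simp add: sums_iff mult.commute)
qed

lemma norm_mat_pow_le: "cmod (mat_pow V M m i j) \<le> C ^ m"
proof (induction m arbitrary: i)
  case (Suc m)
  have "cmod (mat_pow V M (Suc m) i j) \<le> (\<Sum>l\<in>V. cmod (M i l) * cmod (mat_pow V M m l j))"
    by (simp, rule order.trans[OF norm_sum]) (simp add: norm_mult)
  also have "\<dots> \<le> (\<Sum>l\<in>V. cmod (M i l) * C ^ m)"
    using Suc.IH by (intro sum_mono mult_left_mono) auto
  also have "\<dots> \<le> C * C ^ m"
    using row_sum_le bound_nonneg by (simp add: sum_distrib_right[symmetric] mult_right_mono)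
  finally show ?case
    by simp
qed simp

lemma summable_evol: "summable (\<lambda>m. exp_coeff t m * mat_pow V M m i j)"
proof (rule summable_comparison_test'[OF summable_exp_majorant[of t C 1 0]])
  fix m
  show "norm (exp_coeff t m * mat_pow V M m i j) \<le> \<bar>t\<bar> ^ m / fact m * (C ^ m * 1 + 0)"
    unfolding norm_mult norm_exp_coeff using norm_mat_pow_le[of m i j] by (intro mult_left_mono) auto
qed

lemma mat_pow_mult_vec:
  "i \<in> V \<Longrightarrow> (\<Sum>j\<in>V. mat_pow V M m i j * x j) = mat_vec_pow V M m x i"
proof (induction m arbitrary: i)
  case 0
  have "(\<Sum>j\<in>V. mat_pow V M 0 i j * x j) = (\<Sum>j\<in>V. if i = j then x j else 0)"
    by (rule sum.cong) auto
  then show ?case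
    using finite_V 0 by simp
next
  case (Suc m)
  have "(\<Sum>j\<in>V. mat_pow V M (Suc m) i j * x j) = (\<Sum>l\<in>V. M i l * (\<Sum>j\<in>V. mat_pow V M m l j * x j))"
    by (simp add: sum_distrib_right sum_distrib_left algebra_simps) (rule sum.swap)
  then show ?case
    by (simp add: Suc.IH mat_vec_pow_Suc mat_vec_def)
qed

lemma evol_mult_vec: "i \<in> V \<Longrightarrow> (\<Sum>j\<in>V. evol V M t i j * x j) = evol_vec V M t x i"
proof -
  assume i: "i \<in> V"
  have "(\<Sum>j\<in>V. evol V M t i j * x j) = (\<Sum>j\<in>V. \<Sum>m. exp_coeff t m * mat_pow V M m i j * x j)"
    unfolding evol_def exp_coeff_def[symmetric]
    by (intro sum.cong refl) (simp add: suminf_mult2[OF summable_evol])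
  also have "\<dots> = (\<Sum>m. \<Sum>j\<in>V. exp_coeff t m * mat_pow V M m i j * x j)"
    by (rule suminf_sum[symmetric]) (intro summable_mult2 summable_evol)
  also have "\<dots> = (\<Sum>m. exp_coeff t m * mat_vec_pow V M m x i)"
    by (simp add: mat_pow_mult_vec[OF i, symmetric] sum_distrib_left algebra_simps)
  finally show ?thesis
    by (simp add: evol_vec_def)
qed

end

section \<open>Minimal annihilating polynomials\<close>

definition supported_vec :: "nat set \<Rightarrow> (nat \<Rightarrow> complex) \<Rightarrow> bool" where
  "supported_vec V x \<longleftrightarrow> (\<forall>i. i \<notin> V \<longrightarrow> x i = 0)"

definition supported_rows :: "nat set \<Rightarrow> (nat \<Rightarrow> nat \<Rightarrow> complex) \<Rightarrow> bool" where
  "supported_rows V M \<longleftrightarrow> (\<forall>i l. i \<notin> V \<longrightarrow> M i l = 0)"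

lemma supported_vec_nonzero: "supported_vec V v \<Longrightarrow> v \<noteq> (\<lambda>_. 0) \<Longrightarrow> \<exists>i\<in>V. v i \<noteq> 0"
  by (auto simp: supported_vec_def fun_eq_iff)

lemma supported_mat_vec_pow:
  "supported_rows V M \<Longrightarrow> supported_vec V x \<Longrightarrow> supported_vec V (mat_vec_pow V M j x)"
  by (cases j) (simp_all add: mat_vec_pow_Suc supported_rows_def supported_vec_def mat_vec_def)

lemma supported_poly_mat_vec:
  "supported_rows V M \<Longrightarrow> supported_vec V x \<Longrightarrow> supported_vec V (poly_mat_vec V M p x)"
  by (cases p) (auto simp: poly_mat_vec_pCons supported_vec_def supported_rows_def mat_vec_def)

definition vec_scale :: "complex \<Rightarrow> (nat \<Rightarrow> complex) \<Rightarrow> nat \<Rightarrow> complex" where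
  "vec_scale c x = (\<lambda>i. c * x i)"

interpretation vec: vector_space vec_scale
  by unfold_locales (auto simp: vec_scale_def fun_eq_iff algebra_simps plus_fun_def)

lemma sum_fun_apply: "(\<Sum>a\<in>A. f a) (i :: nat) = (\<Sum>a\<in>A. f a i :: complex)"
  by (induction A rule: infinite_finite_induct) (auto simp: zero_fun_def plus_fun_def)

lemma supported_vec_in_span:
  assumes "finite V" "supported_vec V x"
  shows "x \<in> vec.span ((\<lambda>v i. if i = v then 1 else 0) ` V)"
proof -
  have "x = (\<Sum>v\<in>V. vec_scale (x v) (\<lambda>i. if i = v then 1 else 0))"
  proof
    fix i
    have "(\<Sum>v\<in>V. vec_scale (x v) (\<lambda>i. if i = v then 1 else 0)) i = (\<Sum>v\<in>V. if i = v then x v else 0)"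
      by (simp add: vec_scale_def sum_fun_apply if_distrib cong: if_cong)
    then show "x i = (\<Sum>v\<in>V. vec_scale (x v) (\<lambda>i. if i = v then 1 else 0)) i"
      using assms by (auto simp: supported_vec_def)
  qed
  also have "\<dots> \<in> vec.span ((\<lambda>v i. if i = v then 1 else 0) ` V)"
    by (intro vec.span_sum vec.span_scale vec.span_base) auto
  finally show ?thesis .
qed

lemma annihilator_of_dependent_powers:
  assumes "vec.dependent ((\<lambda>j. mat_vec_pow V M j w) ` J)" "finite J"
    and inj: "inj_on (\<lambda>j. mat_vec_pow V M j w) J"
  shows "\<exists>p. p \<noteq> 0 \<and> poly_mat_vec V M p w = (\<lambda>_. 0)"
proof -
  obtain T u where T: "T \<subseteq> (\<lambda>j. mat_vec_pow V M j w) ` J" "(\<Sum>v\<in>T. vec_scale (u v) v) = 0"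
    and u: "\<exists>v\<in>T. u v \<noteq> 0"
    using assms(1) unfolding vec.dependent_explicit by blast
  define I where "I = {j\<in>J. mat_vec_pow V M j w \<in> T}"
  have "finite I"
    using assms(2) by (simp add: I_def)
  have TI: "T = (\<lambda>j. mat_vec_pow V M j w) ` I"
    using T(1) by (auto simp: I_def)
  have inj_I: "inj_on (\<lambda>j. mat_vec_pow V M j w) I"
    using inj by (rule inj_on_subset) (auto simp: I_def)
  define p where "p = (\<Sum>j\<in>I. monom (u (mat_vec_pow V M j w)) j)"
  have "poly_mat_vec V M p w = (\<lambda>i. \<Sum>j\<in>I. u (mat_vec_pow V M j w) * mat_vec_pow V M j w i)"
    using \<open>finite I\<close> by (simp add: p_def poly_mat_vec_sum poly_mat_vec_monom)
  also have "\<dots> = (\<Sum>v\<in>T. vec_scale (u v) v)"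
    by (simp add: TI sum.reindex[OF inj_I] fun_eq_iff vec_scale_def sum_fun_apply)
  finally have "poly_mat_vec V M p w = (\<lambda>_. 0)"
    using T(2) by (simp add: zero_fun_def)
  moreover obtain j0 where j0: "j0 \<in> I" "u (mat_vec_pow V M j0 w) \<noteq> 0"
    using u unfolding TI by auto
  then have "coeff p j0 \<noteq> 0"
    using \<open>finite I\<close> by (simp add: p_def coeff_sum coeff_monom)
  then have "p \<noteq> 0"
    by auto
  ultimately show ?thesis
    by blast
qed

lemma annihilator_exists:
  assumes "finite V" "supported_rows V M" "supported_vec V w"
  shows "\<exists>p. p \<noteq> 0 \<and> poly_mat_vec V M p w = (\<lambda>_. 0)"
proof (cases "inj_on (\<lambda>j. mat_vec_pow V M j w) {..card V}")
  case False
  then obtain i j where ij: "i \<noteq> j" "mat_vec_pow V M i w = mat_vec_pow V M j w"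
    unfolding inj_on_def by auto
  have "coeff (monom 1 i - monom 1 j :: complex poly) i = 1"
    unfolding coeff_diff coeff_monom using ij(1) by simp
  then have "monom 1 i - monom 1 j \<noteq> (0 :: complex poly)"
    by (metis coeff_0 zero_neq_one)
  moreover have "poly_mat_vec V M (monom 1 i - monom 1 j) w = (\<lambda>_. 0)"
    by (simp add: poly_mat_vec_diff poly_mat_vec_monom ij(2))
  ultimately show ?thesis
    by blast
next
  case True
  let ?B = "(\<lambda>v i. if i = v then 1 else 0 :: complex) ` V"
  let ?A = "(\<lambda>j. mat_vec_pow V M j w) ` {..card V}"
  have "?A \<subseteq> vec.span ?B"
    using supported_vec_in_span[OF assms(1) supported_mat_vec_pow[OF assms(2,3)]] by auto
  moreover have "card ?B < card ?A"
    using card_image_le[OF assms(1)] True by (simp add: card_image less_Suc_eq_le)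
  ultimately have "vec.dependent ?A"
    using vec.independent_span_bound[of ?B ?A] assms(1) by fastforce
  then show ?thesis
    using True by (intro annihilator_of_dependent_powers) auto
qed

lemma minimal_annihilator_exists:
  assumes "finite V" "supported_rows V M" "supported_vec V w"
  obtains q where "lead_coeff q = 1" "poly_mat_vec V M q w = (\<lambda>_. 0)"
    "\<And>p. poly_mat_vec V M p w = (\<lambda>_. 0) \<Longrightarrow> degree p < degree q \<Longrightarrow> p = 0"
proof -
  let ?P = "\<lambda>d. \<exists>p. p \<noteq> 0 \<and> poly_mat_vec V M p w = (\<lambda>_. 0) \<and> degree p = d"
  have "\<exists>d. ?P d"
    using annihilator_exists[OF assms] by blast
  then have "?P (LEAST d. ?P d)"
    by (rule LeastI_ex)
  then obtain p where p: "p \<noteq> 0" "poly_mat_vec V M p w = (\<lambda>_. 0)" "degree p = (LEAST d. ?P d)"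
    by blast
  define q where "q = Polynomial.smult (inverse (lead_coeff p)) p"
  have "degree q = degree p"
    using p(1) by (simp add: q_def)
  show ?thesis
  proof
    show "lead_coeff q = 1"
      using p(1) by (simp add: q_def)
    show "poly_mat_vec V M q w = (\<lambda>_. 0)"
      using p(2) by (simp add: q_def poly_mat_vec_smult)
    show "r = 0" if "poly_mat_vec V M r w = (\<lambda>_. 0)" "degree r < degree q" for r
      using that p(3) \<open>degree q = degree p\<close> not_less_Least[of "degree r" ?P] by auto
  qed
qed

section \<open>Spectral consequences of periodicity\<close>

context row_bounded
begin

lemma norm_eigenvalue_le:
  assumes "supported_vec V v" "v \<noteq> (\<lambda>_. 0)" "mat_vec V M v = (\<lambda>i. \<theta> * v i)"
  shows "cmod \<theta> \<le> C"
proof -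
  define m where "m = Max ((\<lambda>i. cmod (v i)) ` V)"
  have le_m: "cmod (v l) \<le> m" if "l \<in> V" for l
    unfolding m_def using finite_V that by auto
  obtain j where j: "j \<in> V" "v j \<noteq> 0"
    using supported_vec_nonzero[OF assms(1,2)] by blast
  have "m \<in> (\<lambda>i. cmod (v i)) ` V"
    unfolding m_def using finite_V j(1) by (intro Max_in) auto
  then obtain i where i: "i \<in> V" "cmod (v i) = m"
    by auto
  have "m > 0"
    using le_m[OF j(1)] j(2) by (smt (verit) zero_less_norm_iff)
  have "cmod \<theta> * m = cmod (mat_vec V M v i)"
    using assms(3) i(2) by (simp add: norm_mult)
  also have "\<dots> \<le> C * m"
    using le_m \<open>m > 0\<close> by (intro norm_mat_vec_le) auto
  finally show ?thesis
    using \<open>m > 0\<close> by simp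
qed

lemma periodic_vec_evol_vec:
  assumes "supported_rows V M" "supported_vec V w" "periodic_vec V M w"
  obtains \<tau> \<eta> where "\<tau> > 0" "cmod \<eta> = 1" "evol_vec V M \<tau> w = (\<lambda>i. \<eta> * w i)"
proof -
  obtain \<tau> \<eta> where "\<tau> > 0" "cmod \<eta> = 1" and periodic: "\<forall>i\<in>V. (\<Sum>j\<in>V. evol V M \<tau> i j * w j) = \<eta> * w i"
    using assms(3) by (auto simp: periodic_vec_def)
  moreover have "evol_vec V M \<tau> w i = \<eta> * w i" for i
  proof (cases "i \<in> V")
    case True
    then show ?thesis
      using periodic evol_mult_vec by simp
  next
    case False
    then have "mat_vec_pow V M m w i = 0" for m
      using supported_mat_vec_pow[OF assms(1,2)] by (simp add: supported_vec_def)
    then show ?thesis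
      using False assms(2) by (simp add: evol_vec_def supported_vec_def)
  qed
  ultimately show ?thesis
    using that by blast
qed

end

lemma real_symmetric_ker_square_eq_ker:
  assumes "finite V" and sym: "\<And>i l. M i l = M l i" and real: "\<And>i l. M i l \<in> \<real>" and "\<theta> \<in> \<real>"
    and y: "y = (\<lambda>i. mat_vec V M z i - \<theta> * z i)" and eigen: "mat_vec V M y = (\<lambda>i. \<theta> * y i)"
  shows "\<forall>i\<in>V. y i = 0"
proof -
  have pointwise: "cnj (y i) * y i = (\<Sum>l\<in>V. cnj (y i) * M i l * z l) - \<theta> * (cnj (y i) * z i)" for i
  proof -
    have "cnj (y i) * y i = cnj (y i) * (mat_vec V M z i - \<theta> * z i)"
      using y by simp
    then show ?thesis
      by (simp add: mat_vec_def algebra_simps sum_distrib_left)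
  qed
  have "(\<Sum>i\<in>V. cnj (y i) * y i) = (\<Sum>i\<in>V. \<Sum>l\<in>V. cnj (y i) * M i l * z l) - \<theta> * (\<Sum>i\<in>V. cnj (y i) * z i)"
    by (simp add: pointwise sum_subtractf sum_distrib_left)
  also have "(\<Sum>i\<in>V. \<Sum>l\<in>V. cnj (y i) * M i l * z l) = (\<Sum>l\<in>V. cnj (mat_vec V M y l) * z l)"
    using real sym
    by (subst sum.swap) (simp add: mat_vec_def sum_distrib_left sum_distrib_right Reals_cnj_iff algebra_simps)
  also have "\<dots> = \<theta> * (\<Sum>i\<in>V. cnj (y i) * z i)"
    using \<open>\<theta> \<in> \<real>\<close> by (simp add: eigen Reals_cnj_iff sum_distrib_left algebra_simps)
  finally have "(\<Sum>i\<in>V. cnj (y i) * y i) = 0"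
    by simp
  moreover have "cnj (y i) * y i = of_real ((cmod (y i))\<^sup>2)" for i
    using complex_norm_square[of "y i"] by (simp add: mult.commute)
  ultimately have "of_real (\<Sum>i\<in>V. (cmod (y i))\<^sup>2) = (0 :: complex)"
    by (simp only: of_real_sum)
  then have "(\<Sum>i\<in>V. (cmod (y i))\<^sup>2) = 0"
    by (simp only: of_real_eq_0_iff)
  then show ?thesis
    using \<open>finite V\<close> by (simp add: sum_nonneg_eq_0_iff)
qed

locale periodic_state = row_bounded V M C
  for V :: "nat set" and M :: "nat \<Rightarrow> nat \<Rightarrow> complex" and C :: real +
  fixes w :: "nat \<Rightarrow> complex" and \<tau> :: real and \<eta> :: complex
  assumes supported_rows: "supported_rows V M"
    and symmetric: "\<And>i l. M i l = M l i"
    and real_entries: "\<And>i l. M i l \<in> \<real>"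
    and supported_w: "supported_vec V w"
    and period_pos: "\<tau> > 0"
    and unimodular: "cmod \<eta> = 1"
    and periodic: "evol_vec V M \<tau> w = (\<lambda>i. \<eta> * w i)"

locale periodic_minpoly = periodic_state +
  fixes q :: "complex poly"
  assumes monic: "lead_coeff q = 1"
    and annihilates: "poly_mat_vec V M q w = (\<lambda>_. 0)"
    and minimal: "\<And>p. poly_mat_vec V M p w = (\<lambda>_. 0) \<Longrightarrow> degree p < degree q \<Longrightarrow> p = 0"
begin

lemma minpoly_nonzero: "q \<noteq> 0"
  using monic by auto

lemma cofactor_nonzero:
  assumes "q = f * r" "degree f > 0"
  shows "poly_mat_vec V M r w \<noteq> (\<lambda>_. 0)"
proof
  assume "poly_mat_vec V M r w = (\<lambda>_. 0)"
  moreover have "f \<noteq> 0" "r \<noteq> 0"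
    using assms minpoly_nonzero by auto
  then have "degree r < degree q"
    using assms by (simp add: degree_mult_eq)
  ultimately show False
    using minimal \<open>r \<noteq> 0\<close> by blast
qed

lemma root_eigenvector:
  assumes "poly q \<theta> = 0"
  obtains v where "supported_vec V v" "v \<noteq> (\<lambda>_. 0)" "mat_vec V M v = (\<lambda>i. \<theta> * v i)"
    "exp (- \<i> * of_real \<tau> * \<theta>) = \<eta>"
proof -
  obtain r where qr: "q = [:-\<theta>, 1:] * r"
    using assms unfolding poly_eq_0_iff_dvd by (auto elim: dvdE)
  define v where "v = poly_mat_vec V M r w"
  have "v \<noteq> (\<lambda>_. 0)"
    unfolding v_def by (rule cofactor_nonzero[OF qr]) simp
  then obtain i where i: "v i \<noteq> 0"
    by auto
  have "poly_mat_vec V M [:-\<theta>, 1:] v = (\<lambda>_. 0)"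
    using annihilates by (simp only: v_def qr poly_mat_vec_mult)
  then have eigen: "mat_vec V M v = (\<lambda>i. \<theta> * v i)"
    by (simp add: poly_mat_vec_linear_factor fun_eq_iff)
  have "\<eta> * v i = evol_vec V M \<tau> v i"
    by (simp add: v_def evol_vec_poly_mat_vec periodic poly_mat_vec_scale)
  also have "\<dots> = exp (- \<i> * of_real \<tau> * \<theta>) * v i"
    by (rule evol_vec_eigenvector[OF eigen])
  finally have "exp (- \<i> * of_real \<tau> * \<theta>) = \<eta>"
    using i by simp
  moreover have "supported_vec V v"
    unfolding v_def by (rule supported_poly_mat_vec[OF supported_rows supported_w])
  ultimately show ?thesis
    using that \<open>v \<noteq> (\<lambda>_. 0)\<close> eigen by blast
qed

lemma root_real:
  assumes "poly q \<theta> = 0"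
  shows "\<theta> \<in> \<real>"
proof -
  obtain v where "exp (- \<i> * of_real \<tau> * \<theta>) = \<eta>"
    using root_eigenvector[OF assms] by blast
  then have "exp (Re (- \<i> * of_real \<tau> * \<theta>)) = 1"
    using unimodular by (metis norm_exp_eq_Re)
  then have "\<tau> * Im \<theta> = 0"
    by simp
  then show ?thesis
    using period_pos by (simp add: complex_is_Real_iff)
qed

lemma rsquarefree_minpoly: "rsquarefree q"
  unfolding rsquarefree_def
proof (intro conjI allI minpoly_nonzero)
  fix \<theta>
  show "order \<theta> q = 0 \<or> order \<theta> q = 1"
  proof (rule ccontr)
    assume "\<not> (order \<theta> q = 0 \<or> order \<theta> q = 1)"
    then have "[:-\<theta>, 1:] ^ 2 dvd q"
      by (subst order_divides) auto
    then obtain r where qr: "q = [:-\<theta>, 1:] * ([:-\<theta>, 1:] * r)"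
      by (metis dvdE power2_eq_square mult.assoc)
    have "poly q \<theta> = 0"
      by (simp add: qr)
    define y where "y = poly_mat_vec V M ([:-\<theta>, 1:] * r) w"
    have "y \<noteq> (\<lambda>_. 0)"
      unfolding y_def by (rule cofactor_nonzero[OF qr]) simp
    moreover have "supported_vec V y"
      unfolding y_def by (rule supported_poly_mat_vec[OF supported_rows supported_w])
    moreover have "\<forall>i\<in>V. y i = 0"
    proof (rule real_symmetric_ker_square_eq_ker[OF finite_V symmetric real_entries])
      show "\<theta> \<in> \<real>"
        by (rule root_real) fact
      show "y = (\<lambda>i. mat_vec V M (poly_mat_vec V M r w) i - \<theta> * poly_mat_vec V M r w i)"
        by (simp only: y_def poly_mat_vec_mult poly_mat_vec_linear_factor)
      have "poly_mat_vec V M [:-\<theta>, 1:] y = (\<lambda>_. 0)"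
        using annihilates by (simp only: y_def qr poly_mat_vec_mult)
      then show "mat_vec V M y = (\<lambda>i. \<theta> * y i)"
        by (simp add: poly_mat_vec_linear_factor fun_eq_iff)
    qed
    ultimately show False
      using supported_vec_nonzero by blast
  qed
qed

lemma norm_root_le: "poly q \<theta> = 0 \<Longrightarrow> cmod \<theta> \<le> C"
  by (metis root_eigenvector norm_eigenvalue_le)

lemma root_progression:
  assumes "poly q \<theta> = 0" "poly q \<theta>' = 0"
  shows "\<exists>n::int. \<theta> = \<theta>' + of_int n * of_real (2 * pi / \<tau>)"
proof -
  have real: "\<theta> = of_real (Re \<theta>)" "\<theta>' = of_real (Re \<theta>')"
    using root_real[OF assms(1)] root_real[OF assms(2)] by (simp_all add: complex_is_Real_iff complex_eq_iff)
  obtain v where "exp (- \<i> * of_real \<tau> * \<theta>) = \<eta>"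
    using root_eigenvector[OF assms(1)] by blast
  moreover obtain v' where "exp (- \<i> * of_real \<tau> * \<theta>') = \<eta>"
    using root_eigenvector[OF assms(2)] by blast
  ultimately have "cis (- \<tau> * Re \<theta>) = cis (- \<tau> * Re \<theta>')"
    using real by (metis cis_conv_exp mult.assoc mult_minus_left of_real_minus of_real_mult mult.commute)
  then have "cis (- \<tau> * Re \<theta> - (- \<tau> * Re \<theta>')) = 1"
    by (simp only: cis_divide[symmetric]) simp
  then have "cos (\<tau> * (Re \<theta>' - Re \<theta>)) = 1"
    by (simp add: complex_eq_iff algebra_simps)
  then obtain n :: int where "\<tau> * (Re \<theta>' - Re \<theta>) = n * 2 * pi"
    by (auto simp: cos_one_2pi_int)
  then have "Re \<theta> = Re \<theta>' + of_int (- n) * (2 * pi / \<tau>)"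
    using period_pos by (simp add: field_simps)
  then have "\<theta> = \<theta>' + of_int (- n) * of_real (2 * pi / \<tau>)"
    by (subst real(1), subst real(2)) (simp add: complex_eq_iff)
  then show ?thesis
    by blast
qed

end

lemma rat_linear_functional_exists:
  obtains g :: "complex \<Rightarrow> rat"
  where "\<And>x y. g (x + y) = g x + g y" "\<And>r x. g (of_rat r * x) = r * g x" "g 1 = 1"
proof -
  interpret complex_over_rat: vector_space "\<lambda>r z. of_rat r * (z :: complex)"
    by unfold_locales (auto simp: algebra_simps of_rat_add of_rat_mult)
  interpret rat_over_rat: vector_space "(*) :: rat \<Rightarrow> rat \<Rightarrow> rat"
    by unfold_locales (auto simp: algebra_simps)
  interpret vector_space_pair "\<lambda>r z. of_rat r * (z :: complex)" "(*) :: rat \<Rightarrow> rat \<Rightarrow> rat" ..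
  have "complex_over_rat.independent {1}"
    by simp
  from linear_independent_extend[OF this, of "\<lambda>_. 1"]
  obtain g where "Vector_Spaces.linear (\<lambda>r z. of_rat r * (z :: complex)) (*) g" "g 1 = 1"
    by auto
  then show ?thesis
    using that unfolding Vector_Spaces.linear_iff by blast
qed

context periodic_minpoly
begin

lemma coeff_minpoly_rat:
  assumes M_rat: "\<And>i l. M i l \<in> \<rat>" and w_rat: "\<And>i. w i \<in> \<rat>"
  shows "coeff q k \<in> \<rat>"
proof -
  obtain g :: "complex \<Rightarrow> rat" where g_add: "\<And>x y. g (x + y) = g x + g y"
    and g_scale: "\<And>r x. g (of_rat r * x) = r * g x" and g_1: "g 1 = 1"
    using rat_linear_functional_exists by blast
  have g_0: "g 0 = 0"
    using g_add[of 0 0] by simp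
  have g_sum: "g (\<Sum>a\<in>A. f a) = (\<Sum>a\<in>A. g (f a))" for A and f :: "nat \<Rightarrow> complex"
    by (induction A rule: infinite_finite_induct) (auto simp: g_0 g_add)
  have pow_rat: "mat_vec_pow V M j w i \<in> \<rat>" for j i
    by (induction j arbitrary: i) (auto simp: w_rat M_rat mat_vec_pow_Suc mat_vec_def)
  define f where "f = (\<lambda>c. of_rat (g c) :: complex)"
  define p where "p = map_poly f q"
  have coeff_p: "coeff p k = f (coeff q k)" for k
    by (simp add: p_def coeff_map_poly f_def g_0)
  have "degree p \<le> degree q"
    by (simp add: p_def map_poly_degree_leq)
  have "poly_mat_vec V M p w i = 0" for i
  proof -
    have "poly_mat_vec V M p w i = (\<Sum>k\<le>degree q. f (coeff q k) * mat_vec_pow V M k w i)"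
      by (simp add: poly_mat_vec_eq_sum[OF \<open>degree p \<le> degree q\<close>] coeff_p)
    also have "\<dots> = (\<Sum>k\<le>degree q. of_rat (g (mat_vec_pow V M k w i * coeff q k)))"
    proof (intro sum.cong refl)
      fix k
      obtain \<rho> where "mat_vec_pow V M k w i = of_rat \<rho>"
        using pow_rat[of k i] by (auto elim: Rats_cases)
      then show "f (coeff q k) * mat_vec_pow V M k w i = of_rat (g (mat_vec_pow V M k w i * coeff q k))"
        by (simp add: g_scale f_def of_rat_mult)
    qed
    also have "\<dots> = of_rat (g (poly_mat_vec V M q w i))"
      by (simp add: poly_mat_vec_eq_sum[of q "degree q"] g_sum of_rat_sum mult.commute)
    finally show ?thesis
      by (simp add: annihilates g_0)
  qed
  then have "poly_mat_vec V M (p - q) w = (\<lambda>_. 0)"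
    by (simp add: poly_mat_vec_diff annihilates)
  moreover have "degree (p - q) < degree q \<or> p - q = 0"
  proof -
    have "coeff (p - q) (degree q) = 0"
      using monic by (simp add: coeff_p f_def g_1)
    then show ?thesis
      using \<open>degree p \<le> degree q\<close> degree_diff_le[of p "degree q" q]
      by (metis le_neq_implies_less leading_coeff_0_iff order_refl)
  qed
  ultimately have "p - q = 0"
    using minimal by blast
  then have "p = q"
    by simp
  then show ?thesis
    using coeff_p[of k] by (simp add: f_def) (metis Rats_of_rat)
qed

end

section \<open>Integrality and the number of eigenvalues\<close>

lemma algebraic_int_eigenvalue_int_mat:
  fixes A :: "int mat" and \<mu> :: complex
  assumes "eigenvalue (map_mat of_int A) \<mu>" "A \<in> carrier_mat n n"
  shows "algebraic_int \<mu>"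
proof -
  have "map_mat of_int A \<in> carrier_mat n n"
    using assms(2) by simp
  then have "poly (char_poly (map_mat of_int A)) \<mu> = 0"
    using assms(1) eigenvalue_root_char_poly by blast
  then have "poly (map_poly of_int (char_poly A)) \<mu> = 0"
    by (simp add: of_int_hom.char_poly_hom[OF assms(2)])
  moreover have "lead_coeff (char_poly A) = 1"
    using degree_monic_char_poly[OF assms(2)] by simp
  ultimately show ?thesis
    unfolding algebraic_int_altdef_ipoly by blast
qed

lemma algebraic_int_eigenvalue:
  fixes I :: "'a set" and N :: "'a \<Rightarrow> 'a \<Rightarrow> int" and x :: "'a \<Rightarrow> complex"
  assumes "finite I" "i0 \<in> I" "x i0 \<noteq> 0"
    and eigen: "\<And>i. i \<in> I \<Longrightarrow> (\<Sum>l\<in>I. of_int (N i l) * x l) = \<mu> * x i"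
  shows "algebraic_int \<mu>"
proof -
  obtain xs where xs: "set xs = I" "distinct xs"
    using finite_distinct_list[OF assms(1)] by blast
  define n where "n = length xs"
  define A :: "int mat" where "A = mat n n (\<lambda>(i, j). N (xs ! i) (xs ! j))"
  define y where "y = vec n (\<lambda>i. x (xs ! i))"
  have A: "A \<in> carrier_mat n n"
    by (simp add: A_def)
  have bij: "bij_betw (\<lambda>j. xs ! j) {0..<n} I"
    using xs by (simp add: n_def bij_betw_def inj_on_def nth_eq_iff_index_eq) (auto simp: set_conv_nth)
  have "map_mat of_int A *\<^sub>v y = \<mu> \<cdot>\<^sub>v y"
  proof (rule eq_vecI)
    fix i
    assume "i < dim_vec (\<mu> \<cdot>\<^sub>v y)"
    then have i: "i < n"
      by (simp add: y_def)
    have "(map_mat of_int A *\<^sub>v y) $ i = (\<Sum>j\<in>{0..<n}. of_int (N (xs ! i) (xs ! j)) * x (xs ! j))"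
      using i by (simp add: A_def y_def mult_mat_vec_def scalar_prod_def)
    also have "\<dots> = (\<Sum>l\<in>I. of_int (N (xs ! i) l) * x l)"
      by (rule sum.reindex_bij_betw[OF bij])
    also have "\<dots> = \<mu> * x (xs ! i)"
      using i xs by (intro eigen) (auto simp: n_def)
    finally show "(map_mat of_int A *\<^sub>v y) $ i = (\<mu> \<cdot>\<^sub>v y) $ i"
      using i by (simp add: y_def)
  qed (simp add: A_def y_def)
  moreover have "y \<noteq> 0\<^sub>v n"
  proof
    assume "y = 0\<^sub>v n"
    obtain k where "k < n" "xs ! k = i0"
      using assms(2) xs by (auto simp: n_def in_set_conv_nth)
    moreover have "y $ k = 0"
      using \<open>y = 0\<^sub>v n\<close> \<open>k < n\<close> by simp
    ultimately show False
      using assms(3) by (simp add: y_def)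
  qed
  moreover have "y \<in> carrier_vec n"
    by (simp add: y_def)
  ultimately have "eigenvalue (map_mat of_int A) \<mu>"
    unfolding eigenvalue_def eigenvector_def using A by auto
  then show ?thesis
    using A by (rule algebraic_int_eigenvalue_int_mat)
qed

lemma eigen_equation_square:
  fixes N :: "'a \<Rightarrow> 'a \<Rightarrow> int" and x :: "'a \<Rightarrow> complex"
  assumes eigen: "\<And>i. i \<in> I \<Longrightarrow> (\<Sum>l\<in>I. of_int (N i l) * x l) = \<mu> * x i" and "i \<in> I"
  shows "(\<Sum>l\<in>I. of_int (\<Sum>m\<in>I. N i m * N m l) * x l) = \<mu>\<^sup>2 * x i"
proof -
  have "(\<Sum>l\<in>I. of_int (\<Sum>m\<in>I. N i m * N m l) * x l) = (\<Sum>m\<in>I. of_int (N i m) * (\<Sum>l\<in>I. of_int (N m l) * x l))"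
    by (simp add: sum_distrib_left sum_distrib_right algebra_simps) (rule sum.swap)
  also have "\<dots> = (\<Sum>m\<in>I. of_int (N i m) * (\<mu> * x m))"
    by (intro sum.cong refl) (simp add: eigen)
  also have "\<dots> = \<mu> * (\<Sum>m\<in>I. of_int (N i m) * x m)"
    by (simp add: sum_distrib_left algebra_simps)
  also have "\<dots> = \<mu>\<^sup>2 * x i"
    by (simp add: eigen[OF \<open>i \<in> I\<close>] power2_eq_square)
  finally show ?thesis .
qed

text \<open>\<open>\<theta> - \<theta>'\<close> is an eigenvalue of the Kronecker sum \<open>N = Mi \<otimes> 1 - 1 \<otimes> Mi\<close> (eigenvector
  \<open>v \<otimes> v'\<close>), hence its square is an eigenvalue of the integer matrix \<open>N\<^sup>2\<close>.\<close>
lemma algebraic_int_eigenvalue_diff_sq: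
  fixes Mi :: "nat \<Rightarrow> nat \<Rightarrow> int" and v v' :: "nat \<Rightarrow> complex"
  assumes "finite V"
    and v: "j \<in> V" "v j \<noteq> 0" "\<And>i. i \<in> V \<Longrightarrow> (\<Sum>l\<in>V. of_int (Mi i l) * v l) = \<theta> * v i"
    and v': "j' \<in> V" "v' j' \<noteq> 0" "\<And>i. i \<in> V \<Longrightarrow> (\<Sum>l\<in>V. of_int (Mi i l) * v' l) = \<theta>' * v' i"
  shows "algebraic_int ((\<theta> - \<theta>')\<^sup>2)"
proof -
  define N :: "nat \<times> nat \<Rightarrow> nat \<times> nat \<Rightarrow> int" where
    "N = (\<lambda>(i, j) (l, m). (if j = m then Mi i l else 0) - (if i = l then Mi j m else 0))"
  define x where "x = (\<lambda>(i, j). v i * v' j)"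
  have eigen: "(\<Sum>lm\<in>V \<times> V. of_int (N ij lm) * x lm) = (\<theta> - \<theta>') * x ij" if ij_V: "ij \<in> V \<times> V" for ij
  proof -
    obtain i j where ij: "ij = (i, j)" "i \<in> V" "j \<in> V"
      using ij_V by auto
    have pointwise: "of_int (N (i, j) (l, m)) * x (l, m) = (if j = m then of_int (Mi i l) * v l * v' j else 0)
        - (if i = l then v i * (of_int (Mi j m) * v' m) else 0)" for l m
      by (simp add: N_def x_def algebra_simps)
    have "(\<Sum>lm\<in>V \<times> V. of_int (N ij lm) * x lm) = (\<Sum>l\<in>V. \<Sum>m\<in>V. of_int (N (i, j) (l, m)) * x (l, m))"
      by (simp add: ij(1) sum.cartesian_product)
    also have "\<dots> = (\<Sum>l\<in>V. of_int (Mi i l) * v l * v' j - (if i = l then v i * (\<Sum>m\<in>V. of_int (Mi j m) * v' m) else 0))"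
      using assms(1) ij by (intro sum.cong refl) (simp add: pointwise sum_subtractf sum_distrib_left)
    also have "\<dots> = (\<Sum>l\<in>V. of_int (Mi i l) * v l) * v' j - v i * (\<Sum>m\<in>V. of_int (Mi j m) * v' m)"
      using assms(1) ij by (simp add: sum_subtractf sum_distrib_right)
    also have "\<dots> = (\<theta> - \<theta>') * x ij"
      using ij by (simp add: v(3) v'(3) x_def) (simp add: algebra_simps)
    finally show ?thesis .
  qed
  have "x (j, j') \<noteq> 0"
    using v v' by (simp add: x_def)
  then show ?thesis
    using assms(1) v(1) v'(1) eigen_equation_square[of "V \<times> V" N x, OF eigen]
    by (intro algebraic_int_eigenvalue[of "V \<times> V" "(j, j')" x "\<lambda>ij lm. \<Sum>c\<in>V \<times> V. N ij c * N c lm"]) auto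
qed

lemma sum_sq_diff_eq:
  fixes S :: "complex set"
  shows "(\<Sum>a\<in>S. \<Sum>b\<in>S. (a - b)\<^sup>2) = 2 * of_nat (card S) * (\<Sum>a\<in>S. a\<^sup>2) - 2 * (\<Sum>S)\<^sup>2"
proof -
  have "(\<Sum>a\<in>S. \<Sum>b\<in>S. (a - b)\<^sup>2) = (\<Sum>a\<in>S. \<Sum>b\<in>S. a\<^sup>2 + b\<^sup>2 - 2 * (a * b))"
    by (simp add: power2_diff mult.assoc)
  also have "\<dots> = (\<Sum>a\<in>S. of_nat (card S) * a\<^sup>2 + (\<Sum>b\<in>S. b\<^sup>2) - 2 * (a * (\<Sum>S)))"
    by (simp add: sum_subtractf sum.distrib sum_distrib_left)
  also have "\<dots> = 2 * of_nat (card S) * (\<Sum>a\<in>S. a\<^sup>2) - 2 * (\<Sum>S)\<^sup>2"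
    by (simp add: sum_subtractf sum.distrib sum_distrib_left sum_distrib_right power2_eq_square algebra_simps)
  finally show ?thesis .
qed

lemma progression_sq_diff_rat:
  fixes S :: "complex set" and \<kappa> :: real
  assumes "finite S" and progression: "\<And>\<theta>. \<theta> \<in> S \<Longrightarrow> \<exists>n::int. \<theta> = \<theta>\<^sub>0 + of_int n * of_real \<kappa>"
    and "\<Sum>S \<in> \<rat>" "(\<Sum>\<theta>\<in>S. \<theta>\<^sup>2) \<in> \<rat>" and "a \<in> S" "b \<in> S"
  shows "(a - b)\<^sup>2 \<in> \<rat>"
proof (cases "a = b")
  case False
  define n where "n \<theta> = (SOME n::int. \<theta> = \<theta>\<^sub>0 + of_int n * of_real \<kappa>)" for \<theta>
  have n: "\<theta> = \<theta>\<^sub>0 + of_int (n \<theta>) * of_real \<kappa>" if "\<theta> \<in> S" for \<theta>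
    unfolding n_def using progression[OF that] by (rule someI_ex)
  have diff: "x - y = of_int (n x - n y) * of_real \<kappa>" if "x \<in> S" "y \<in> S" for x y
    by (subst n[OF that(1)], subst n[OF that(2)]) (simp add: algebra_simps)
  define R where "R = (\<Sum>x\<in>S. \<Sum>y\<in>S. (n x - n y)\<^sup>2)"
  have "(n a - n b)\<^sup>2 \<le> (\<Sum>y\<in>S. (n a - n y)\<^sup>2)"
    using assms(1,6) by (intro member_le_sum) auto
  also have "\<dots> \<le> R"
    unfolding R_def using assms(1,5)
    by (intro member_le_sum[where f = "\<lambda>x. \<Sum>y\<in>S. (n x - n y)\<^sup>2"] sum_nonneg) auto
  finally have "(n a - n b)\<^sup>2 \<le> R" .
  moreover have "n a \<noteq> n b"
    using diff[OF assms(5,6)] False by auto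
  ultimately have "R > 0"
    by (smt (verit) zero_less_power2)
  have "of_int R * of_real (\<kappa>\<^sup>2) = (\<Sum>x\<in>S. \<Sum>y\<in>S. (x - y)\<^sup>2)"
    by (simp add: R_def sum_distrib_right diff power_mult_distrib)
  also have "\<dots> \<in> \<rat>"
    unfolding sum_sq_diff_eq using assms(3,4) by (intro Rats_diff Rats_mult) auto
  finally have "of_int R * of_real (\<kappa>\<^sup>2) / of_int R \<in> (\<rat> :: complex set)"
    by (intro Rats_divide) auto
  then have "(of_real (\<kappa>\<^sup>2) :: complex) \<in> \<rat>"
    using \<open>R > 0\<close> by simp
  then show ?thesis
    by (simp add: diff[OF assms(5,6)] power_mult_distrib)
qed simp

lemma card_separated_le:
  fixes S :: "real set" and K :: nat
  assumes bounded: "\<And>x. x \<in> S \<Longrightarrow> \<bar>x\<bar> \<le> K"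
    and separated: "\<And>x y. x \<in> S \<Longrightarrow> y \<in> S \<Longrightarrow> x \<noteq> y \<Longrightarrow> 1 \<le> \<bar>x - y\<bar>"
  shows "card S \<le> 2 * K + 1"
proof -
  have "inj_on (\<lambda>x. nat \<lfloor>x + K\<rfloor>) S"
  proof (rule inj_onI)
    fix x y
    assume "x \<in> S" "y \<in> S" "nat \<lfloor>x + K\<rfloor> = nat \<lfloor>y + K\<rfloor>"
    moreover have "0 \<le> \<lfloor>x + K\<rfloor>" "0 \<le> \<lfloor>y + K\<rfloor>"
      using bounded[OF \<open>x \<in> S\<close>] bounded[OF \<open>y \<in> S\<close>] by linarith+
    ultimately have "\<bar>x - y\<bar> < 1"
      by linarith
    then show "x = y"
      using separated \<open>x \<in> S\<close> \<open>y \<in> S\<close> by force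
  qed
  moreover have "(\<lambda>x. nat \<lfloor>x + K\<rfloor>) ` S \<subseteq> {0..2 * K}"
  proof
    fix n
    assume "n \<in> (\<lambda>x. nat \<lfloor>x + K\<rfloor>) ` S"
    then obtain x where "x \<in> S" "n = nat \<lfloor>x + K\<rfloor>"
      by auto
    moreover have "\<lfloor>x + K\<rfloor> \<le> int (2 * K)"
      using bounded[OF \<open>x \<in> S\<close>] by linarith
    ultimately show "n \<in> {0..2 * K}"
      by auto
  qed
  ultimately have "card S \<le> card {0..2 * K}"
    by (intro card_inj_on_le) auto
  then show ?thesis
    by simp
qed

lemma card_real_progression_le:
  fixes S :: "complex set" and K :: nat and \<kappa> :: real
  assumes "finite S" "S \<subseteq> \<real>" and bounded: "\<And>\<theta>. \<theta> \<in> S \<Longrightarrow> cmod \<theta> \<le> K"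
    and progression: "\<And>\<theta>. \<theta> \<in> S \<Longrightarrow> \<exists>n::int. \<theta> = \<theta>\<^sub>0 + of_int n * of_real \<kappa>"
    and "\<Sum>S \<in> \<rat>" "(\<Sum>\<theta>\<in>S. \<theta>\<^sup>2) \<in> \<rat>"
    and algebraic_int: "\<And>a b. a \<in> S \<Longrightarrow> b \<in> S \<Longrightarrow> algebraic_int ((a - b)\<^sup>2)"
  shows "card S \<le> 2 * K + 1"
proof -
  have Re_eq: "x = of_real (Re x)" if "x \<in> S" for x
    using that \<open>S \<subseteq> \<real>\<close> by (auto simp: complex_is_Real_iff complex_eq_iff)
  have "inj_on Re S"
    by (metis Re_eq inj_onI)
  moreover have "card (Re ` S) \<le> 2 * K + 1"
  proof (rule card_separated_le)
    show "\<bar>x\<bar> \<le> K" if "x \<in> Re ` S" for x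
    proof -
      obtain \<theta> where "\<theta> \<in> S" "x = Re \<theta>"
        using \<open>x \<in> Re ` S\<close> by auto
      then show ?thesis
        using bounded[of \<theta>] abs_Re_le_cmod[of \<theta>] by linarith
    qed
    fix x y
    assume "x \<in> Re ` S" "y \<in> Re ` S" "x \<noteq> y"
    then obtain a b where ab: "a \<in> S" "b \<in> S" "x = Re a" "y = Re b"
      by auto
    have "(a - b)\<^sup>2 \<in> \<int>"
      using progression_sq_diff_rat[OF \<open>finite S\<close> progression assms(5,6) ab(1,2)]
        algebraic_int[OF ab(1,2)] rational_algebraic_int_is_int by blast
    moreover have "(a - b)\<^sup>2 = of_real ((x - y)\<^sup>2)"
      using Re_eq[OF ab(1)] Re_eq[OF ab(2)] ab(3,4) by (metis of_real_diff of_real_power)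
    ultimately obtain z :: int where "(x - y)\<^sup>2 = of_int z"
      by (metis Ints_cases of_real_eq_iff of_real_of_int_eq)
    moreover have "(x - y)\<^sup>2 > 0"
      using \<open>x \<noteq> y\<close> by simp
    ultimately have "(x - y)\<^sup>2 \<ge> 1"
      by simp
    then show "1 \<le> \<bar>x - y\<bar>"
      by (metis abs_square_less_1 not_le)
  qed
  ultimately show ?thesis
    by (simp add: card_image)
qed

lemma coeff_linear_factor_mult_Suc:
  "coeff ([:-a, 1:] * p) (Suc n) = coeff p n - a * (coeff p (Suc n) :: complex)"
  by simp

lemma coeff_prod_linear_factors:
  fixes S :: "complex set"
  assumes "finite S"
  shows "(\<forall>n>card S. coeff (\<Prod>z\<in>S. [:-z, 1:]) n = 0) \<and> coeff (\<Prod>z\<in>S. [:-z, 1:]) (card S) = 1 \<and>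
    (card S \<ge> 1 \<longrightarrow> coeff (\<Prod>z\<in>S. [:-z, 1:]) (card S - 1) = - \<Sum>S) \<and>
    (card S \<ge> 2 \<longrightarrow> coeff (\<Prod>z\<in>S. [:-z, 1:]) (card S - 2) = ((\<Sum>S)\<^sup>2 - (\<Sum>z\<in>S. z\<^sup>2)) / 2)"
  using assms
proof (induction S rule: finite_induct)
  case empty
  then show ?case
    by (auto simp: coeff_1)
next
  case (insert a S)
  define p where "p = (\<Prod>z\<in>S. [:-z, 1:])"
  define c where "c = card S"
  have prod: "(\<Prod>z\<in>insert a S. [:-z, 1:]) = [:-a, 1:] * p" and card: "card (insert a S) = Suc c"
    using insert by (simp_all add: p_def c_def)
  note IH = insert.IH[folded p_def c_def]
  have high: "\<forall>n>Suc c. coeff ([:-a, 1:] * p) n = 0"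
  proof (intro allI impI)
    fix n
    assume "n > Suc c"
    then obtain m where "n = Suc m" "m > c"
      by (cases n) auto
    then show "coeff ([:-a, 1:] * p) n = 0"
      using IH by (simp only: coeff_linear_factor_mult_Suc) simp
  qed
  have top: "coeff ([:-a, 1:] * p) (Suc c) = 1"
    using IH by (simp only: coeff_linear_factor_mult_Suc) simp
  have sub1: "coeff ([:-a, 1:] * p) c = - \<Sum>(insert a S)"
  proof (cases c)
    case 0
    then have "S = {}"
      using insert(1) by (simp add: c_def)
    then show ?thesis
      using 0 by (simp add: p_def)
  next
    case (Suc c')
    then show ?thesis
      using IH insert(1,2) by (simp only: coeff_linear_factor_mult_Suc) simp
  qed
  have sub2: "coeff ([:-a, 1:] * p) (Suc c - 2) = ((\<Sum>(insert a S))\<^sup>2 - (\<Sum>z\<in>insert a S. z\<^sup>2)) / 2"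
    if two: "Suc c \<ge> 2"
  proof -
    have e2: "((\<Sum>(insert a S))\<^sup>2 - (\<Sum>z\<in>insert a S. z\<^sup>2)) / 2 = a * \<Sum>S + ((\<Sum>S)\<^sup>2 - (\<Sum>z\<in>S. z\<^sup>2)) / 2"
      using insert(1,2) by (simp add: field_simps power2_eq_square)
    show ?thesis
    proof (cases "c = 1")
      case True
      then obtain b where "S = {b}"
        using insert(1) by (auto simp: c_def card_Suc_eq)
      then have "coeff ([:-a, 1:] * p) (Suc c - 2) = a * b"
        using True by (simp add: p_def)
      moreover have "((\<Sum>(insert a S))\<^sup>2 - (\<Sum>z\<in>insert a S. z\<^sup>2)) / 2 = a * b"
        using \<open>S = {b}\<close> insert(2) by (simp add: power2_eq_square algebra_simps)
      ultimately show ?thesis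
        by simp
    next
      case False
      then obtain c' where "c = Suc (Suc c')"
        using two by (cases c; cases "c - 1") auto
      then show ?thesis
        using IH e2 by (simp only: coeff_linear_factor_mult_Suc) simp
    qed
  qed
  show ?case
    unfolding prod card using high top sub1 sub2 by simp
qed

lemma power_sums_roots_rat:
  fixes S :: "complex set"
  assumes "finite S" "card S \<ge> 2" and rat: "\<And>k. coeff (\<Prod>z\<in>S. [:-z, 1:]) k \<in> \<rat>"
  shows "\<Sum>S \<in> \<rat>" "(\<Sum>z\<in>S. z\<^sup>2) \<in> \<rat>"
proof -
  note coeffs = coeff_prod_linear_factors[OF assms(1)]
  have "- \<Sum>S \<in> \<rat>"
    using coeffs assms(2) rat by (metis Suc_1 Suc_leD)
  then show "\<Sum>S \<in> \<rat>"
    by (metis Rats_minus_iff)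
  moreover have "((\<Sum>S)\<^sup>2 - (\<Sum>z\<in>S. z\<^sup>2)) / 2 \<in> \<rat>"
    using coeffs assms(2) rat by metis
  ultimately have "(\<Sum>S)\<^sup>2 - 2 * (((\<Sum>S)\<^sup>2 - (\<Sum>z\<in>S. z\<^sup>2)) / 2) \<in> \<rat>"
    by (intro Rats_diff Rats_mult Rats_power) auto
  moreover have "(\<Sum>S)\<^sup>2 - 2 * (((\<Sum>S)\<^sup>2 - (\<Sum>z\<in>S. z\<^sup>2)) / 2) = (\<Sum>z\<in>S. z\<^sup>2)"
    by (simp add: field_simps)
  ultimately show "(\<Sum>z\<in>S. z\<^sup>2) \<in> \<rat>"
    by simp
qed

context periodic_minpoly
begin

lemma root_diff_sq_algebraic_int:
  assumes M_int: "\<And>i l. M i l \<in> \<int>" and "poly q a = 0" "poly q b = 0"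
  shows "algebraic_int ((a - b)\<^sup>2)"
proof -
  have "\<forall>i l. \<exists>z. M i l = of_int z"
    using M_int by (metis Ints_cases)
  then obtain Mi where Mi: "\<And>i l. M i l = of_int (Mi i l)"
    by metis
  obtain v where v: "supported_vec V v" "v \<noteq> (\<lambda>_. 0)" "mat_vec V M v = (\<lambda>i. a * v i)"
    using root_eigenvector[OF assms(2)] by blast
  obtain v' where v': "supported_vec V v'" "v' \<noteq> (\<lambda>_. 0)" "mat_vec V M v' = (\<lambda>i. b * v' i)"
    using root_eigenvector[OF assms(3)] by blast
  obtain j where "j \<in> V" "v j \<noteq> 0"
    using supported_vec_nonzero[OF v(1,2)] by blast
  moreover obtain j' where "j' \<in> V" "v' j' \<noteq> 0"
    using supported_vec_nonzero[OF v'(1,2)] by blast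
  moreover have "(\<Sum>l\<in>V. of_int (Mi i l) * v l) = a * v i" for i
    using fun_cong[OF v(3), of i] by (simp add: mat_vec_def Mi)
  moreover have "(\<Sum>l\<in>V. of_int (Mi i l) * v' l) = b * v' i" for i
    using fun_cong[OF v'(3), of i] by (simp add: mat_vec_def Mi)
  ultimately show ?thesis
    using finite_V by (intro algebraic_int_eigenvalue_diff_sq[of V j v Mi a j' v' b])
qed

lemma degree_minpoly_le:
  assumes M_int: "\<And>i l. M i l \<in> \<int>" and w_rat: "\<And>i. w i \<in> \<rat>" and "C = real K"
  shows "degree q \<le> 2 * K + 1"
proof -
  define S where "S = {\<theta>. poly q \<theta> = 0}"
  have "finite S"
    unfolding S_def using minpoly_nonzero by (rule poly_roots_finite)
  have q_eq: "q = (\<Prod>z\<in>S. [:-z, 1:])"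
    using complex_poly_decompose_rsquarefree[OF rsquarefree_minpoly] monic by (simp add: S_def)
  have "degree q = card S"
    by (subst q_eq, subst degree_prod_eq_sum_degree) (auto simp: \<open>finite S\<close>)
  show ?thesis
  proof (cases "card S \<ge> 2")
    case True
    then obtain \<theta>\<^sub>0 where "\<theta>\<^sub>0 \<in> S"
      by fastforce
    have "coeff (\<Prod>z\<in>S. [:-z, 1:]) k \<in> \<rat>" for k
      using coeff_minpoly_rat[of k] M_int w_rat q_eq by (auto intro: Ints_subset_Rats[THEN subsetD])
    note power_sums = power_sums_roots_rat[OF \<open>finite S\<close> True this]
    have "card S \<le> 2 * K + 1"
    proof (rule card_real_progression_le[OF \<open>finite S\<close> _ _ _ power_sums])
      show "S \<subseteq> \<real>"
        using root_real by (auto simp: S_def)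
      show "cmod \<theta> \<le> K" if "\<theta> \<in> S" for \<theta>
        using norm_root_le that \<open>C = real K\<close> by (simp add: S_def)
      show "\<exists>n::int. \<theta> = \<theta>\<^sub>0 + of_int n * of_real (2 * pi / \<tau>)" if "\<theta> \<in> S" for \<theta>
        using root_progression that \<open>\<theta>\<^sub>0 \<in> S\<close> by (simp add: S_def)
      show "algebraic_int ((a - b)\<^sup>2)" if "a \<in> S" "b \<in> S" for a b
        using root_diff_sq_algebraic_int[OF M_int] that by (simp add: S_def)
    qed
    then show ?thesis
      using \<open>degree q = card S\<close> by simp
  qed (use \<open>degree q = card S\<close> in simp)
qed

end

section \<open>Distance from the support of the state\<close>

fun within_dist :: "(nat \<Rightarrow> nat \<Rightarrow> bool) \<Rightarrow> nat set \<Rightarrow> nat \<Rightarrow> nat \<Rightarrow> bool" where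
  "within_dist E A 0 u \<longleftrightarrow> u \<in> A"
| "within_dist E A (Suc j) u \<longleftrightarrow> within_dist E A j u \<or> (\<exists>l. E u l \<and> within_dist E A j l)"

lemma within_dist_mono: "within_dist E A j u \<Longrightarrow> j \<le> j' \<Longrightarrow> within_dist E A j' u"
  by (induction j' arbitrary: u) (auto simp: le_Suc_eq)

lemma within_dist_connected:
  assumes "connected_graph V E" "simple_graph V E" "a \<in> A" "a \<in> V" "u \<in> V"
  shows "\<exists>j. within_dist E A j u"
proof -
  have "E\<^sup>*\<^sup>* a u"
    using assms(1,4,5) by (simp add: connected_graph_def)
  then show ?thesis
  proof (induction rule: rtranclp_induct)
    case base
    then show ?case
      using assms(3) by (metis within_dist.simps(1))
  next
    case (step y z)
    then obtain j where "within_dist E A j y"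
      by blast
    moreover have "E z y"
      using step(2) assms(2) by (simp add: simple_graph_def)
    ultimately have "within_dist E A (Suc j) z"
      by auto
    then show ?case
      by blast
  qed
qed

lemma card_within_dist_le:
  assumes "simple_graph V E" "max_valency_le V E k" "finite A"
  shows "card {u\<in>V. within_dist E A j u} \<le> card A * (k + 1) ^ j"
proof (induction j)
  case 0
  have "card {u\<in>V. within_dist E A 0 u} \<le> card A"
    using assms(3) by (intro card_mono) auto
  then show ?case
    by simp
next
  case (Suc j)
  let ?B = "{u\<in>V. within_dist E A j u}"
  have "finite V" and E_V: "\<And>x y. E x y \<Longrightarrow> x \<in> V \<and> y \<in> V" and E_sym: "\<And>x y. E x y \<Longrightarrow> E y x"
    using assms(1) by (auto simp: simple_graph_def)
  have "{u\<in>V. within_dist E A (Suc j) u} \<subseteq> ?B \<union> (\<Union>l\<in>?B. {u\<in>V. E l u})"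
  proof
    fix u
    assume u: "u \<in> {u\<in>V. within_dist E A (Suc j) u}"
    show "u \<in> ?B \<union> (\<Union>l\<in>?B. {u\<in>V. E l u})"
    proof (cases "within_dist E A j u")
      case False
      then obtain l where "E u l" "within_dist E A j l"
        using u by auto
      then show ?thesis
        using u E_V E_sym by blast
    qed (use u in auto)
  qed
  then have "card {u\<in>V. within_dist E A (Suc j) u} \<le> card (?B \<union> (\<Union>l\<in>?B. {u\<in>V. E l u}))"
    using \<open>finite V\<close> by (intro card_mono) auto
  also have "\<dots> \<le> card ?B + (\<Sum>l\<in>?B. card {u\<in>V. E l u})"
    using \<open>finite V\<close> by (intro order.trans[OF card_Un_le] add_left_mono card_UN_le) auto
  also have "\<dots> \<le> card ?B + card ?B * k"
    using assms(2) sum_mono[of ?B "\<lambda>l. card {u\<in>V. E l u}" "\<lambda>_. k"]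
    by (auto simp: max_valency_le_def Defs.degree_def)
  also have "\<dots> \<le> card A * (k + 1) ^ Suc j"
    using Suc.IH mult_right_mono[OF Suc.IH, of "k + 1"] by (simp add: algebra_simps)
  finally show ?case .
qed

locale signed_adjacency =
  fixes V :: "nat set" and E :: "nat \<Rightarrow> nat \<Rightarrow> bool" and \<sigma> :: complex
    and M :: "nat \<Rightarrow> nat \<Rightarrow> complex"
  assumes simple: "simple_graph V E"
    and sign: "\<sigma> = 1 \<or> \<sigma> = -1"
    and off_diagonal: "\<And>u l. l \<noteq> u \<Longrightarrow> M u l = (if E u l then \<sigma> else 0)"
begin

lemma finite_V: "finite V"
  using simple by (simp add: simple_graph_def)

lemma mat_vec_pow_beyond_dist:
  assumes "\<And>i. i \<notin> A \<Longrightarrow> w i = 0" "\<not> within_dist E A j u"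
  shows "mat_vec_pow V M j w u = 0"
  using assms(2)
proof (induction j arbitrary: u)
  case 0
  then show ?case
    using assms(1) by simp
next
  case (Suc j)
  have "M u l * mat_vec_pow V M j w l = 0" for l
    using Suc off_diagonal[of l u] by (cases "l = u") auto
  then have "(\<Sum>l\<in>V. M u l * mat_vec_pow V M j w l) = 0"
    by (intro sum.neutral) blast
  then show ?case
    by (simp add: mat_vec_pow_Suc mat_vec_def)
qed

text \<open>At exact distance \<open>j\<close> from \<open>A\<close> no cancellation can occur: every walk of length \<open>j\<close>
  from \<open>A\<close> uses only off-diagonal entries, all equal to \<open>\<sigma>\<close>.\<close>
lemma mat_vec_pow_at_dist:
  assumes zero: "\<And>i. i \<notin> A \<Longrightarrow> w i = 0" and pos: "\<And>i. i \<in> A \<Longrightarrow> \<exists>r>0. w i = of_real r"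
    and "within_dist E A j u" "0 < j \<longrightarrow> \<not> within_dist E A (j - 1) u"
  shows "\<exists>r>0. \<sigma> ^ j * mat_vec_pow V M j w u = of_real r"
  using assms(3,4)
proof (induction j arbitrary: u)
  case 0
  then show ?case
    using pos by simp
next
  case (Suc j)
  then have far: "\<not> within_dist E A j u"
    by simp
  define L where "L = {l\<in>V. E u l \<and> within_dist E A j l}"
  have "finite L"
    using finite_V by (simp add: L_def)
  have "L \<noteq> {}"
    using Suc.prems far simple by (auto simp: L_def simple_graph_def)
  have "\<exists>r>0. \<sigma> ^ j * mat_vec_pow V M j w l = of_real r" if "l \<in> L" for l
  proof (rule Suc.IH)
    show "within_dist E A j l"
      using that by (simp add: L_def)
    show "0 < j \<longrightarrow> \<not> within_dist E A (j - 1) l"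
      using that far by (cases j) (auto simp: L_def)
  qed
  then obtain r where r: "\<And>l. l \<in> L \<Longrightarrow> r l > 0 \<and> \<sigma> ^ j * mat_vec_pow V M j w l = of_real (r l)"
    by metis
  have "M u l * mat_vec_pow V M j w l = (if l \<in> L then \<sigma> * mat_vec_pow V M j w l else 0)" if "l \<in> V" for l
    using that off_diagonal[of l u] simple mat_vec_pow_beyond_dist[OF zero far]
      mat_vec_pow_beyond_dist[OF zero, where j = j and u = l]
    by (cases "l = u") (auto simp: L_def simple_graph_def)
  then have "mat_vec_pow V M (Suc j) w u = (\<Sum>l\<in>L. \<sigma> * mat_vec_pow V M j w l)"
    using finite_V by (simp add: mat_vec_pow_Suc mat_vec_def sum.If_cases L_def Int_def conj_commute)
  then have "\<sigma> ^ Suc j * mat_vec_pow V M (Suc j) w u = (\<Sum>l\<in>L. (\<sigma> * \<sigma>) * (\<sigma> ^ j * mat_vec_pow V M j w l))"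
    by (simp add: sum_distrib_left algebra_simps)
  also have "\<dots> = of_real (\<Sum>l\<in>L. r l)"
    using r sign by auto
  finally show ?case
    using r \<open>finite L\<close> \<open>L \<noteq> {}\<close> by (intro exI[of _ "\<Sum>l\<in>L. r l"]) (auto intro: sum_pos)
qed

lemma within_dist_annihilator_degree:
  assumes zero: "\<And>i. i \<notin> A \<Longrightarrow> w i = 0" and pos: "\<And>i. i \<in> A \<Longrightarrow> \<exists>r>0. w i = of_real r"
    and q: "lead_coeff q = 1" "poly_mat_vec V M q w = (\<lambda>_. 0)"
    and "within_dist E A j u"
  shows "within_dist E A (degree q - 1) u"
proof -
  define j0 where "j0 = (LEAST j. within_dist E A j u)"
  have j0: "within_dist E A j0 u"
    unfolding j0_def by (rule LeastI) fact
  have closer: "\<not> within_dist E A j' u" if "j' < j0" for j'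
    using that unfolding j0_def by (rule not_less_Least)
  have "j0 < degree q"
  proof (rule ccontr)
    assume "\<not> j0 < degree q"
    have "0 = poly_mat_vec V M q (mat_vec_pow V M (j0 - degree q) w) u"
      by (simp add: poly_mat_vec_mat_vec_pow q(2))
    also have "\<dots> = (\<Sum>i\<le>degree q. coeff q i * mat_vec_pow V M (i + (j0 - degree q)) w u)"
      by (simp add: poly_mat_vec_eq_sum[OF order_refl] mat_vec_pow_add)
    also have "\<dots> = mat_vec_pow V M j0 w u"
      using \<open>\<not> j0 < degree q\<close> q(1)
      by (simp add: lessThan_Suc_atMost[symmetric] mat_vec_pow_beyond_dist[OF zero] closer)
    finally have "mat_vec_pow V M j0 w u = 0"
      by simp
    moreover obtain r where "r > 0" "\<sigma> ^ j0 * mat_vec_pow V M j0 w u = of_real r"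
      using mat_vec_pow_at_dist[where A = A and w = w, OF zero pos j0] closer by auto
    ultimately show False
      by simp
  qed
  then show ?thesis
    using within_dist_mono[OF j0] by simp
qed

end

section \<open>Graph Hamiltonians\<close>

lemma degree_eq_0_outside: "simple_graph V E \<Longrightarrow> i \<notin> V \<Longrightarrow> Defs.degree V E i = 0"
  by (auto simp: Defs.degree_def simple_graph_def)

lemma degree_le_max_valency: "simple_graph V E \<Longrightarrow> max_valency_le V E k \<Longrightarrow> Defs.degree V E i \<le> k"
  by (cases "i \<in> V") (simp_all add: max_valency_le_def degree_eq_0_outside)

locale graph_hamiltonian = signed_adjacency V E \<sigma> M
  for V :: "nat set" and E :: "nat \<Rightarrow> nat \<Rightarrow> bool" and \<sigma> :: complex
    and M :: "nat \<Rightarrow> nat \<Rightarrow> complex" +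
  fixes k :: nat
  assumes connected: "connected_graph V E"
    and max_valency: "max_valency_le V E k"
    and supported_rows: "supported_rows V M"
    and integer_entries: "\<And>i l. M i l \<in> \<int>"
    and diagonal_le: "\<And>i. cmod (M i i) \<le> k"
begin

lemma symmetric: "M i l = M l i"
  using simple off_diagonal[of i l] off_diagonal[of l i] by (cases "i = l") (auto simp: simple_graph_def)

lemma row_sum_le: "(\<Sum>l\<in>V. cmod (M i l)) \<le> real (2 * k)"
proof -
  have "cmod (M i l) \<le> (if l = i then real k else 0) + (if E i l then 1 else 0)" for l
    using diagonal_le[of i] off_diagonal[of l i] sign simple by (auto simp: simple_graph_def)
  then have "(\<Sum>l\<in>V. cmod (M i l)) \<le> (\<Sum>l\<in>V. if l = i then real k else 0) + (\<Sum>l\<in>V. if E i l then 1 else 0)"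
    by (simp add: sum_mono sum.distrib[symmetric])
  also have "\<dots> \<le> real k + real (Defs.degree V E i)"
    using finite_V by (simp add: sum.If_cases Defs.degree_def Int_def conj_commute)
  also have "\<dots> \<le> real (2 * k)"
    using degree_le_max_valency[OF simple max_valency] by simp
  finally show ?thesis .
qed

theorem card_le_if_periodic_pair:
  assumes "a \<in> V" "b \<in> V" "a \<noteq> b" "s \<in> \<rat>" "s > 0"
    and "periodic_vec V M (pair_state a b s)"
  shows "card V \<le> 2 * (k + 1) ^ (4 * k)"
proof -
  let ?w = "pair_state a b s"
  interpret row_bounded V M "real (2 * k)"
    using finite_V row_sum_le by unfold_locales
  have supported_w: "supported_vec V ?w"
    using assms(1,2) by (auto simp: supported_vec_def pair_state_def)
  obtain \<tau> \<eta> where "\<tau> > 0" "cmod \<eta> = 1" "evol_vec V M \<tau> ?w = (\<lambda>i. \<eta> * ?w i)"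
    using periodic_vec_evol_vec[OF supported_rows supported_w assms(6)] .
  moreover obtain q where q: "lead_coeff q = 1" "poly_mat_vec V M q ?w = (\<lambda>_. 0)"
    "\<And>p. poly_mat_vec V M p ?w = (\<lambda>_. 0) \<Longrightarrow> degree p < degree q \<Longrightarrow> p = 0"
    using minimal_annihilator_exists[OF finite_V supported_rows supported_w] by blast
  moreover have "M i l \<in> \<real>" for i l
    using integer_entries[of i l] by (auto elim: Ints_cases)
  ultimately interpret periodic_minpoly V M "real (2 * k)" ?w \<tau> \<eta> q
    using supported_rows symmetric supported_w by unfold_locales auto
  have "degree q \<le> 4 * k + 1"
    using degree_minpoly_le[OF integer_entries, of "2 * k"] assms(4) by (simp add: pair_state_def)
  have "within_dist E {a, b} (4 * k) u" if u: "u \<in> V" for u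
  proof -
    obtain j where "within_dist E {a, b} j u"
      using within_dist_connected[OF connected simple _ assms(1) u, of "{a, b}"] by auto
    then have "within_dist E {a, b} (degree q - 1) u"
      using assms(3,5) q(1,2) by (intro within_dist_annihilator_degree) (auto simp: pair_state_def)
    then show ?thesis
      using within_dist_mono \<open>degree q \<le> 4 * k + 1\<close> by simp
  qed
  then have "card V \<le> card {u\<in>V. within_dist E {a, b} (4 * k) u}"
    using finite_V by (intro card_mono) auto
  also have "\<dots> \<le> card {a, b} * (k + 1) ^ (4 * k)"
    by (rule card_within_dist_le[OF simple max_valency]) simp
  finally show ?thesis
    using assms(3) by simp
qed

end

lemma graph_hamiltonian_adj_mat:
  "simple_graph V E \<Longrightarrow> connected_graph V E \<Longrightarrow> max_valency_le V E k \<Longrightarrow>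
    graph_hamiltonian V E 1 (adj_mat V E) k"
  by unfold_locales (auto simp: Defs.adj_mat_def supported_rows_def simple_graph_def)

lemma graph_hamiltonian_lap_mat:
  "simple_graph V E \<Longrightarrow> connected_graph V E \<Longrightarrow> max_valency_le V E k \<Longrightarrow>
    graph_hamiltonian V E (-1) (lap_mat V E) k"
  by unfold_locales
    (auto simp: lap_mat_def deg_mat_def Defs.adj_mat_def supported_rows_def degree_eq_0_outside
      degree_le_max_valency, auto simp: simple_graph_def)

lemma graph_hamiltonian_slap_mat:
  "simple_graph V E \<Longrightarrow> connected_graph V E \<Longrightarrow> max_valency_le V E k \<Longrightarrow>
    graph_hamiltonian V E 1 (slap_mat V E) k"
  by unfold_locales
    (auto simp: slap_mat_def deg_mat_def Defs.adj_mat_def supported_rows_def degree_eq_0_outside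
      degree_le_max_valency, auto simp: simple_graph_def)

section \<open>Finitely many isomorphism classes\<close>

lemma graph_iso_initial_segment:
  assumes "finite V"
  obtains R where "R \<subseteq> {..<card V} \<times> {..<card V}" "graph_iso (V, E) ({0..<card V}, \<lambda>x y. (x, y) \<in> R)"
proof -
  obtain f where f: "bij_betw f V {0..<card V}"
    using ex_bij_betw_finite_nat[OF assms] by blast
  define R where "R = {(f x, f y) | x y. x \<in> V \<and> y \<in> V \<and> E x y}"
  have "R \<subseteq> {..<card V} \<times> {..<card V}"
    using f by (auto simp: R_def bij_betw_def)
  moreover have "E x y \<longleftrightarrow> (f x, f y) \<in> R" if "x \<in> V" "y \<in> V" for x y
    using that f by (auto simp: R_def bij_betw_def dest: inj_onD)
  then have "graph_iso (V, E) ({0..<card V}, \<lambda>x y. (x, y) \<in> R)"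
    unfolding graph_iso_def using f by auto
  ultimately show ?thesis
    using that by blast
qed

lemma finitely_many_iso_classes_if_card_le:
  assumes "\<And>V E. P V E \<Longrightarrow> finite V \<and> card V \<le> N"
  shows "finitely_many_iso_classes P"
proof -
  define S :: "graph set" where
    "S = (\<lambda>(n, R). ({0..<n}, \<lambda>x y. (x, y) \<in> R)) ` ({..N} \<times> Pow ({..<N} \<times> {..<N}))"
  have "\<exists>G\<in>S. graph_iso (V, E) G" if P: "P V E" for V E
  proof -
    obtain R where R: "R \<subseteq> {..<card V} \<times> {..<card V}" "graph_iso (V, E) ({0..<card V}, \<lambda>x y. (x, y) \<in> R)"
      using graph_iso_initial_segment assms[OF P] by blast
    moreover have "({0..<card V}, \<lambda>x y. (x, y) \<in> R) \<in> S"
      unfolding S_def using assms[OF P] R(1) by (intro image_eqI[of _ _ "(card V, R)"]) auto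
    ultimately show ?thesis
      by blast
  qed
  moreover have "finite S"
    by (simp add: S_def)
  ultimately show ?thesis
    unfolding finitely_many_iso_classes_def by blast
qed

theorem mainTheorem2:
  fixes k :: nat and s :: real
  assumes "k > 0" and "s \<in> \<rat>" and "s > 0"
  shows "\<forall>H\<in>{adj_mat, lap_mat, slap_mat}.
           finitely_many_iso_classes (\<lambda>V E. simple_graph V E \<and> connected_graph V E \<and>
              max_valency_le V E k \<and> has_periodic_pair H s V E)"
proof
  fix H
  assume "H \<in> {adj_mat, lap_mat, slap_mat}"
  then obtain \<sigma> where hamiltonian: "\<And>V E. simple_graph V E \<Longrightarrow> connected_graph V E \<Longrightarrow>
      max_valency_le V E k \<Longrightarrow> graph_hamiltonian V E \<sigma> (H V E) k"
    using graph_hamiltonian_adj_mat graph_hamiltonian_lap_mat graph_hamiltonian_slap_mat by blast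
  show "finitely_many_iso_classes (\<lambda>V E. simple_graph V E \<and> connected_graph V E \<and>
      max_valency_le V E k \<and> has_periodic_pair H s V E)"
  proof (rule finitely_many_iso_classes_if_card_le)
    fix V E
    assume "simple_graph V E \<and> connected_graph V E \<and> max_valency_le V E k \<and> has_periodic_pair H s V E"
    then show "finite V \<and> card V \<le> 2 * (k + 1) ^ (4 * k)"
      using graph_hamiltonian.card_le_if_periodic_pair[OF hamiltonian] assms(2,3)
      by (auto simp: has_periodic_pair_def simple_graph_def)
  qed
qed

end
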